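(* For every integer $m\ge3$ there is a binary minimal self-orthogonal linear code with parameters $[3\cdot2^{m-1}-1,\ m,\ 2^{m-1}]_2$ and maximum weight $2^m$ (constructed from the binary simplex $[2^m-1,m,2^{m-1}]_2$ code) which violates the Ashikhmin–Barg condition.
   Context: A code $\mathbf{C}$ is self-orthogonal if $\mathbf{C}\subseteq\mathbf{C}^\perp$ for the standard inner product. A binary linear code is minimal if any two nonzero codewords $\mathbf{c},\mathbf{c}'$ with $supp(\mathbf{c}')\subseteq supp(\mathbf{c})$ are equal. Ashikhmin–Barg condition (binary): $w_{min}/w_{max}>1/2$, where $w_{min},w_{max}$ are the minimum and maximum weights of nonzero codewords. The binary simplex code of dimension $m$ is generated by the $m\times(2^m-1)$ matrix whose columns are all nonzero vectors of $\mathbf{F}_2^m$. *)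

theory Defs
  imports Complex_Main "HOL-Library.Z2"
begin

definition words :: "nat \<Rightarrow> bit list set" where
  "words n = {x. length x = n}"

definition zero_word :: "nat \<Rightarrow> bit list" where
  "zero_word n = replicate n 0"

definition encode :: "nat \<Rightarrow> nat \<Rightarrow> (nat \<Rightarrow> nat \<Rightarrow> bit) \<Rightarrow> bit list \<Rightarrow> bit list" where
  "encode k n G u = map (\<lambda>j. \<Sum>i<k. u ! i * G i j) [0..<n]"

definition binary_linear_code :: "nat \<Rightarrow> nat \<Rightarrow> bit list set \<Rightarrow> bool" where
  "binary_linear_code n k C \<longleftrightarrow>
     (\<exists>G. C = encode k n G ` words k \<and> inj_on (encode k n G) (words k))"

definition supp :: "bit list \<Rightarrow> nat set" where
  "supp x = {i. i < length x \<and> x ! i \<noteq> 0}"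

definition wt :: "bit list \<Rightarrow> nat" where
  "wt x = card (supp x)"

definition inner :: "bit list \<Rightarrow> bit list \<Rightarrow> bit" where
  "inner x y = (\<Sum>i<length x. x ! i * y ! i)"

definition nonzero_words :: "nat \<Rightarrow> bit list set \<Rightarrow> bit list set" where
  "nonzero_words n C = C - {zero_word n}"

definition w_min :: "nat \<Rightarrow> bit list set \<Rightarrow> nat" where
  "w_min n C = Min (wt ` nonzero_words n C)"

definition w_max :: "nat \<Rightarrow> bit list set \<Rightarrow> nat" where
  "w_max n C = Max (wt ` nonzero_words n C)"

definition dual_code :: "nat \<Rightarrow> bit list set \<Rightarrow> bit list set" where
  "dual_code n C = {y \<in> words n. \<forall>c\<in>C. inner c y = 0}"

definition self_orthogonal :: "nat \<Rightarrow> bit list set \<Rightarrow> bool" where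
  "self_orthogonal n C \<longleftrightarrow> C \<subseteq> dual_code n C"

definition minimal_code :: "nat \<Rightarrow> bit list set \<Rightarrow> bool" where
  "minimal_code n C \<longleftrightarrow>
     (\<forall>c\<in>nonzero_words n C. \<forall>c'\<in>nonzero_words n C. supp c' \<subseteq> supp c \<longrightarrow> c = c')"

definition ashikhmin_barg :: "nat \<Rightarrow> bit list set \<Rightarrow> bool" where
  "ashikhmin_barg n C \<longleftrightarrow> real (w_min n C) / real (w_max n C) > 1 / 2"

end

theory Submission
  imports Defs
begin

(* The code is the binary simplex code of dimension m with every codeword extended by
   2^(m-1) copies of its first message bit u!0.  A nonzero linear form on F_2^m is 1 on
   exactly half of the space, so every nonzero simplex codeword has weight 2^(m-1) and the
   extended codewords have weight 2^(m-1) or 2^m; hence w_min/w_max = 1/2.  For m >= 3 two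
   linear forms are simultaneously 1 on an even number of points (inclusion-exclusion with
   their sum), which together with the even length of the appended block gives
   self-orthogonality.  Minimality: if supp c' is contained in supp c, the simplex parts have
   nested supports and equal weights, so they coincide, and the simplex encoding is
   injective. *)

lemma UNIV_bit: "(UNIV :: bit set) = {0, 1}"
  using bit.exhaust by auto

lemma of_nat_bit_eq_0_iff: "(of_nat k :: bit) = 0 \<longleftrightarrow> even k"
  by (simp only: Z2.bit_eq_iff[of "of_nat k"] even_of_nat_iff even_zero simp_thms)

lemma sum_bit_eq_of_nat_card:
  fixes f :: "'a \<Rightarrow> bit"
  assumes "finite S"
  shows "sum f S = of_nat (card {x\<in>S. f x = 1})"
proof -
  have "sum f S = sum f {x\<in>S. f x = 1}"
    by (rule sum.mono_neutral_right) (use assms in auto)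
  also have "\<dots> = sum (\<lambda>_. 1) {x\<in>S. f x = 1}"
    by (rule sum.cong) auto
  finally show ?thesis
    by simp
qed

lemma words_eq_lists: "words m = {xs. set xs \<subseteq> UNIV \<and> length xs = m}"
  by (simp add: words_def)

lemma finite_words [simp]: "finite (words m)"
  unfolding words_eq_lists by (rule finite_lists_length_eq) (simp add: UNIV_bit)

lemma card_words: "card (words m) = 2 ^ m"
  unfolding words_eq_lists by (subst card_lists_length_eq) (simp_all add: UNIV_bit numeral_2_eq_2)

lemma zero_word_in_words [simp]: "zero_word m \<in> words m"
  by (simp add: words_def zero_word_def)

lemma inner_zero_word_left [simp]: "inner (zero_word m) x = 0"
  by (simp add: inner_def zero_word_def)

lemma inner_zero_word_right: "u \<in> words m \<Longrightarrow> inner u (zero_word m) = 0"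
  by (simp add: inner_def zero_word_def words_def)

lemma inner_commute: "length u = length x \<Longrightarrow> inner u x = inner x u"
  unfolding inner_def by (rule sum.cong) (simp_all only: mult.commute)

definition unit_word :: "nat \<Rightarrow> nat \<Rightarrow> bit list" where
  "unit_word m i = (zero_word m)[i := 1]"

lemma length_unit_word [simp]: "length (unit_word m i) = m"
  by (simp add: unit_word_def zero_word_def)

lemma nth_unit_word: "j < m \<Longrightarrow> unit_word m i ! j = (if j = i then 1 else 0)"
  by (simp add: unit_word_def zero_word_def nth_list_update)

lemma unit_word_in_nonzero_words:
  assumes "i < m"
  shows "unit_word m i \<in> words m - {zero_word m}"
proof -
  have "unit_word m i ! i \<noteq> zero_word m ! i"
    using assms by (simp add: nth_unit_word zero_word_def)
  then show ?thesis
    by (auto simp: words_def)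
qed

lemma inner_unit_word:
  assumes "u \<in> words m" "i < m"
  shows "inner u (unit_word m i) = u ! i"
proof -
  have "inner u (unit_word m i) = (\<Sum>j<m. if j = i then u ! j else 0)"
    unfolding inner_def using assms by (intro sum.cong) (auto simp: words_def nth_unit_word)
  then show ?thesis
    using assms(2) by simp
qed

lemma words_eqI_inner:
  assumes "u \<in> words m" "v \<in> words m"
    and "\<And>x. x \<in> words m - {zero_word m} \<Longrightarrow> inner u x = inner v x"
  shows "u = v"
proof (rule nth_equalityI)
  show "length u = length v"
    using assms(1,2) by (simp add: words_def)
  fix i assume "i < length u"
  then have "i < m"
    using assms(1) by (simp add: words_def)
  then have "inner u (unit_word m i) = inner v (unit_word m i)"
    using assms(3) unit_word_in_nonzero_words by blast
  then show "u ! i = v ! i"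
    using assms(1,2) \<open>i < m\<close> by (simp add: inner_unit_word)
qed

definition word_add :: "bit list \<Rightarrow> bit list \<Rightarrow> bit list" where
  "word_add u v = map2 (+) u v"

lemma length_word_add [simp]: "length (word_add u v) = min (length u) (length v)"
  by (simp add: word_add_def)

lemma word_add_in_words: "u \<in> words m \<Longrightarrow> v \<in> words m \<Longrightarrow> word_add u v \<in> words m"
  by (simp add: words_def)

lemma nth_word_add: "i < length u \<Longrightarrow> i < length v \<Longrightarrow> word_add u v ! i = u ! i + v ! i"
  by (simp add: word_add_def)

lemma word_add_cancel: "length x = length y \<Longrightarrow> word_add (word_add x y) y = x"
  by (rule nth_equalityI) (auto simp: nth_word_add)

lemma word_add_eq_zero_word_iff:
  assumes "u \<in> words m" "v \<in> words m"
  shows "word_add u v = zero_word m \<longleftrightarrow> u = v"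
proof
  assume sum_zero: "word_add u v = zero_word m"
  show "u = v"
  proof (rule nth_equalityI)
    show "length u = length v"
      using assms by (simp add: words_def)
    fix i assume "i < length u"
    then have "u ! i + v ! i = 0"
      using assms arg_cong[OF sum_zero, of "\<lambda>x. x ! i"]
      by (simp add: nth_word_add words_def zero_word_def)
    then show "u ! i = v ! i"
      by (cases "u ! i"; cases "v ! i") auto
  qed
next
  assume "u = v"
  then show "word_add u v = zero_word m"
    using assms by (intro nth_equalityI) (auto simp: nth_word_add words_def zero_word_def)
qed

lemma inner_word_add:
  assumes "length u = length v"
  shows "inner (word_add u v) x = inner u x + inner v x"
proof -
  have "inner (word_add u v) x = (\<Sum>i<length u. u ! i * x ! i + v ! i * x ! i)"
    unfolding inner_def
  proof (rule sum.cong)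
    fix i assume "i \<in> {..<length u}"
    then show "word_add u v ! i * x ! i = u ! i * x ! i + v ! i * x ! i"
      using assms by (simp only: nth_word_add lessThan_iff distrib_right)
  qed (simp add: assms)
  then show ?thesis
    by (simp only: inner_def sum.distrib assms)
qed

lemma nonzero_wordE:
  assumes "u \<in> words m" "u \<noteq> zero_word m"
  obtains i where "i < m" "u ! i = 1"
proof -
  have "\<exists>i<m. u ! i = 1"
  proof (rule ccontr)
    assume "\<not> (\<exists>i<m. u ! i = 1)"
    then have "u = zero_word m"
      using assms(1) by (intro nth_equalityI) (auto simp: words_def zero_word_def)
    with assms(2) show False ..
  qed
  then show ?thesis
    using that by blast
qed

lemma inner_word_add_unit_word:
  assumes "u \<in> words m" "x \<in> words m" "i < m"
  shows "inner u (word_add x (unit_word m i)) = inner u x + u ! i"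
proof -
  have lengths: "length x = m" "length u = m"
    using assms(1,2) by (simp_all add: words_def)
  have "inner u (word_add x (unit_word m i)) = inner (word_add x (unit_word m i)) u"
    using lengths by (intro inner_commute) simp
  also have "\<dots> = inner x u + inner (unit_word m i) u"
    using lengths by (intro inner_word_add) simp
  also have "\<dots> = inner u x + inner u (unit_word m i)"
    using lengths by (simp add: inner_commute)
  finally show ?thesis
    using inner_unit_word[OF assms(1,3)] by simp
qed

lemma card_inner_eq_1:
  assumes u: "u \<in> words m" "u \<noteq> zero_word m"
  shows "card {x\<in>words m. inner u x = 1} = 2 ^ (m - 1)"
proof -
  obtain i where i: "i < m" "u ! i = 1"
    using u by (rule nonzero_wordE)
  define flip where "flip x = word_add x (unit_word m i)" for x
  have flip_in: "flip x \<in> words m" if "x \<in> words m" for x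
    using that word_add_in_words unit_word_in_nonzero_words[OF i(1)] by (simp add: flip_def)
  have flip_flip: "flip (flip x) = x" if "x \<in> words m" for x
    using that by (simp add: flip_def word_add_cancel words_def)
  have inner_flip: "inner u (flip x) = inner u x + 1" if "x \<in> words m" for x
    using inner_word_add_unit_word[OF u(1) that i(1)] i(2) by (simp add: flip_def)
  let ?Z = "{x\<in>words m. inner u x = 0}" and ?O = "{x\<in>words m. inner u x = 1}"
  have "bij_betw flip ?Z ?O"
  proof (rule bij_betw_byWitness[where f' = flip])
    show "\<forall>x\<in>?Z. flip (flip x) = x" "\<forall>x\<in>?O. flip (flip x) = x"
      by (simp_all add: flip_flip)
    show "flip ` ?Z \<subseteq> ?O" "flip ` ?O \<subseteq> ?Z"
      by (auto simp: flip_in inner_flip)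
  qed
  then have "card ?Z = card ?O"
    by (rule bij_betw_same_card)
  moreover have "card (words m) = card ?Z + card ?O"
  proof -
    have "words m = ?Z \<union> ?O"
      by auto
    moreover have "card (?Z \<union> ?O) = card ?Z + card ?O"
      by (rule card_Un_disjoint) auto
    ultimately show ?thesis
      by simp
  qed
  ultimately have "2 ^ m = 2 * card ?O"
    by (simp add: card_words)
  moreover have "(2::nat) ^ m = 2 * 2 ^ (m - 1)"
    using i(1) by (cases m) auto
  ultimately show ?thesis
    by simp
qed

lemma card_Un_Diff_Int_add_card_Int:
  assumes "finite A" "finite B"
  shows "card ((A \<union> B) - (A \<inter> B)) + 2 * card (A \<inter> B) = card A + card B"
proof -
  have "card ((A \<union> B) - (A \<inter> B)) = card (A \<union> B) - card (A \<inter> B)"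
    using assms by (intro card_Diff_subset) auto
  moreover have "card (A \<inter> B) \<le> card (A \<union> B)"
    using assms by (intro card_mono) auto
  ultimately show ?thesis
    using card_Un_Int[OF assms] by linarith
qed

lemma even_card_inner_both_1:
  assumes "3 \<le> m" and u: "u \<in> words m" and v: "v \<in> words m"
  shows "even (card {x\<in>words m. inner u x = 1 \<and> inner v x = 1})"
proof -
  have half_even: "(2::nat) ^ (m - 1) = 2 * (2 * 2 ^ (m - 3))"
    using assms(1) by (simp flip: power_Suc)
  consider "u = zero_word m \<or> v = zero_word m" | "u = v" "u \<noteq> zero_word m"
    | "u \<noteq> v" "u \<noteq> zero_word m" "v \<noteq> zero_word m"
    by blast
  then show ?thesis
  proof cases
    case 1
    then show ?thesis
      using u v by (auto simp: inner_zero_word_right)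
  next
    case 2
    then show ?thesis
      using card_inner_eq_1[OF u] half_even by simp
  next
    case 3
    let ?A = "{x\<in>words m. inner u x = 1}" and ?B = "{x\<in>words m. inner v x = 1}"
    have "word_add u v \<in> words m" "word_add u v \<noteq> zero_word m"
      using word_add_in_words[OF u v] word_add_eq_zero_word_iff[OF u v] 3(1) by auto
    then have "card {x\<in>words m. inner (word_add u v) x = 1} = 2 ^ (m - 1)"
      by (rule card_inner_eq_1)
    moreover have "{x\<in>words m. inner (word_add u v) x = 1} = (?A \<union> ?B) - (?A \<inter> ?B)"
      using u v by (auto simp: inner_word_add words_def)
    ultimately have "2 * card (?A \<inter> ?B) = 2 ^ (m - 1)"
      using card_Un_Diff_Int_add_card_Int[of ?A ?B]
        card_inner_eq_1[OF u 3(2)] card_inner_eq_1[OF v 3(3)]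
      by simp
    moreover have "?A \<inter> ?B = {x\<in>words m. inner u x = 1 \<and> inner v x = 1}"
      by auto
    ultimately show ?thesis
      using half_even by simp
  qed
qed

lemma wt_eq_length_filter: "wt x = length (filter (\<lambda>b. b = 1) x)"
  by (simp add: wt_def supp_def length_filter_conv_card)

lemma wt_append [simp]: "wt (x @ y) = wt x + wt y"
  by (simp add: wt_eq_length_filter)

lemma wt_replicate: "wt (replicate k b) = (if b = 1 then k else 0)"
  by (simp add: wt_eq_length_filter)

lemma wt_map_distinct: "distinct xs \<Longrightarrow> wt (map f xs) = card {x\<in>set xs. f x = 1}"
  by (simp add: wt_eq_length_filter distinct_length_filter Int_commute Collect_conj_eq)

lemma supp_eq_supp_append_Int: "supp x = supp (x @ y) \<inter> {..<length x}"
  by (auto simp: supp_def nth_append)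

lemma eq_if_supp_subset_wt_le:
  assumes "length x = length y" "supp x \<subseteq> supp y" "wt y \<le> wt x"
  shows "x = y"
proof -
  have "supp x = supp y"
    using assms(2,3) unfolding wt_def by (intro card_seteq) (simp_all add: supp_def)
  show ?thesis
  proof (rule nth_equalityI)
    fix i assume "i < length x"
    moreover have "i \<in> supp x \<longleftrightarrow> i \<in> supp y"
      using \<open>supp x = supp y\<close> by simp
    ultimately have "x ! i = 1 \<longleftrightarrow> y ! i = 1"
      using assms(1) by (simp add: supp_def)
    then show "x ! i = y ! i"
      by (cases "x ! i"; cases "y ! i") simp_all
  qed (rule assms(1))
qed

lemma inner_eq_sum_list: "length x = length y \<Longrightarrow> inner x y = sum_list (map2 (*) x y)"
  by (simp add: inner_def sum_list_sum_nth atLeast0LessThan)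

lemma inner_append:
  "length x = length x' \<Longrightarrow> length y = length y' \<Longrightarrow>
    inner (x @ y) (x' @ y') = inner x x' + inner y y'"
  by (simp add: inner_eq_sum_list)

lemma inner_replicate: "inner (replicate k a) (replicate k b) = of_nat k * (a * b)"
  by (simp add: inner_eq_sum_list sum_list_replicate)

lemma inner_map_distinct:
  "distinct xs \<Longrightarrow> inner (map f xs) (map g xs) = (\<Sum>x\<in>set xs. f x * g x)"
  by (simp add: inner_eq_sum_list zip_map_map zip_same_conv_map sum_list_distinct_conv_sum_set)

lemma not_ashikhmin_barg_if_w_max_eq_double:
  assumes "w_max n C = 2 * w_min n C"
  shows "\<not> ashikhmin_barg n C"
  unfolding ashikhmin_barg_def assms by (cases "w_min n C = 0") simp_all

(* ws lists the columns of a generator matrix of the binary simplex code. *)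
locale nonzero_word_enumeration =
  fixes m :: nat and ws :: "bit list list"
  assumes distinct_ws: "distinct ws"
    and set_ws: "set ws = words m - {zero_word m}"
begin

lemma length_ws: "length ws = 2 ^ m - 1"
proof -
  have "length ws = card (words m - {zero_word m})"
    using distinct_card[OF distinct_ws] set_ws by simp
  then show ?thesis
    by (simp add: card_words)
qed

definition simplex_encode :: "bit list \<Rightarrow> bit list" where
  "simplex_encode u = map (inner u) ws"

lemma length_simplex_encode [simp]: "length (simplex_encode u) = 2 ^ m - 1"
  by (simp add: simplex_encode_def length_ws)

lemma wt_simplex_encode:
  assumes "u \<in> words m" "u \<noteq> zero_word m"
  shows "wt (simplex_encode u) = 2 ^ (m - 1)"
proof -
  have "{x\<in>set ws. inner u x = 1} = {x\<in>words m. inner u x = 1}"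
    using inner_zero_word_right[OF assms(1)] by (auto simp: set_ws)
  then show ?thesis
    using card_inner_eq_1[OF assms] by (simp only: simplex_encode_def wt_map_distinct[OF distinct_ws])
qed

lemma inner_simplex_encode:
  assumes "3 \<le> m" "u \<in> words m" "v \<in> words m"
  shows "inner (simplex_encode u) (simplex_encode v) = 0"
proof -
  have "inner (simplex_encode u) (simplex_encode v) = (\<Sum>x\<in>set ws. inner u x * inner v x)"
    by (simp only: simplex_encode_def inner_map_distinct distinct_ws)
  also have "\<dots> = of_nat (card {x\<in>set ws. inner u x * inner v x = 1})"
    by (rule sum_bit_eq_of_nat_card) simp
  also have "{x\<in>set ws. inner u x * inner v x = 1} = {x\<in>words m. inner u x = 1 \<and> inner v x = 1}"
    using inner_zero_word_right[OF assms(2)] by (auto simp: set_ws)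
  finally show ?thesis
    using even_card_inner_both_1[OF assms] by (simp add: of_nat_bit_eq_0_iff)
qed

lemma inj_on_simplex_encode: "inj_on simplex_encode (words m)"
proof (rule inj_onI)
  fix u v assume u: "u \<in> words m" and v: "v \<in> words m"
    and "simplex_encode u = simplex_encode v"
  then have "inner u x = inner v x" if "x \<in> set ws" for x
    using that by (simp add: simplex_encode_def map_eq_conv)
  then show "u = v"
    using u v by (intro words_eqI_inner) (auto simp: set_ws)
qed

definition extended_encode :: "bit list \<Rightarrow> bit list" where
  "extended_encode u = simplex_encode u @ replicate (2 ^ (m - 1)) (u ! 0)"

definition extended_length :: nat where
  "extended_length = 2 ^ m - 1 + 2 ^ (m - 1)"

lemma length_extended_encode [simp]: "length (extended_encode u) = extended_length"
  by (simp add: extended_encode_def extended_length_def)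

lemma wt_extended_encode:
  assumes "u \<in> words m" "u \<noteq> zero_word m"
  shows "wt (extended_encode u) = (if u ! 0 = 1 then 2 ^ m else 2 ^ (m - 1))"
proof -
  have "m \<noteq> 0"
    using assms by (auto simp: words_def zero_word_def)
  then have "(2::nat) ^ (m - 1) + 2 ^ (m - 1) = 2 ^ m"
    by (cases m) auto
  then show ?thesis
    using wt_simplex_encode[OF assms] by (simp add: extended_encode_def wt_replicate)
qed

lemma extended_encode_zero_word:
  assumes "0 < m"
  shows "extended_encode (zero_word m) = zero_word extended_length"
proof -
  have "simplex_encode (zero_word m) = map (\<lambda>_. 0) ws"
    by (simp add: simplex_encode_def)
  then have "simplex_encode (zero_word m) = replicate (2 ^ m - 1) 0"
    by (simp add: map_replicate_const length_ws)
  then show ?thesis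
    unfolding extended_encode_def extended_length_def zero_word_def replicate_add
    using assms by simp
qed

lemma inj_on_extended_encode: "inj_on extended_encode (words m)"
proof (rule inj_onI)
  fix u v assume "u \<in> words m" "v \<in> words m" "extended_encode u = extended_encode v"
  moreover from this have "simplex_encode u = simplex_encode v"
    by (simp add: extended_encode_def append_eq_append_conv)
  ultimately show "u = v"
    using inj_on_simplex_encode by (simp add: inj_on_eq_iff)
qed

lemma nonzero_words_extended_code:
  assumes "0 < m"
  shows "nonzero_words extended_length (extended_encode ` words m)
    = extended_encode ` (words m - {zero_word m})"
  unfolding nonzero_words_def extended_encode_zero_word[OF assms, symmetric]
  by (subst inj_on_image_set_diff[OF inj_on_extended_encode]) auto

lemma wt_nonzero_extended_code:
  assumes "2 \<le> m"
  shows "wt ` nonzero_words extended_length (extended_encode ` words m)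
    = {2 ^ (m - 1), 2 ^ m}"
proof -
  let ?N = "words m - {zero_word m}"
  have "wt ` nonzero_words extended_length (extended_encode ` words m)
      = (\<lambda>u. wt (extended_encode u)) ` ?N"
    using assms by (simp add: nonzero_words_extended_code image_image)
  also have "\<dots> = (\<lambda>u. if u ! 0 = 1 then 2 ^ m else 2 ^ (m - 1)) ` ?N"
    by (rule image_cong) (simp_all add: wt_extended_encode)
  also have "\<dots> = {2 ^ (m - 1), 2 ^ m}" (is "?f ` ?N = _")
  proof
    show "?f ` ?N \<subseteq> {2 ^ (m - 1), 2 ^ m}"
      by (intro image_subsetI) simp
    have "unit_word m 0 \<in> ?N" "unit_word m 1 \<in> ?N"
      using assms unit_word_in_nonzero_words by simp_all
    then have "?f (unit_word m 0) \<in> ?f ` ?N" "?f (unit_word m 1) \<in> ?f ` ?N"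
      by blast+
    moreover have "?f (unit_word m 0) = 2 ^ m" "?f (unit_word m 1) = 2 ^ (m - 1)"
      using assms by (simp_all add: nth_unit_word)
    ultimately show "{2 ^ (m - 1), 2 ^ m} \<subseteq> ?f ` ?N"
      by simp
  qed
  finally show ?thesis .
qed

lemma w_min_extended_code:
  assumes "2 \<le> m"
  shows "w_min extended_length (extended_encode ` words m) = 2 ^ (m - 1)"
proof -
  have "(2::nat) ^ (m - 1) \<le> 2 ^ m"
    by (rule power_increasing) simp_all
  then show ?thesis
    unfolding w_min_def wt_nonzero_extended_code[OF assms] by (simp add: min_def)
qed

lemma w_max_extended_code:
  assumes "2 \<le> m"
  shows "w_max extended_length (extended_encode ` words m) = 2 ^ m"
proof -
  have "(2::nat) ^ (m - 1) \<le> 2 ^ m"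
    by (rule power_increasing) simp_all
  then show ?thesis
    unfolding w_max_def wt_nonzero_extended_code[OF assms] by (simp add: max_def)
qed

lemma inner_extended_encode:
  assumes "3 \<le> m" "u \<in> words m" "v \<in> words m"
  shows "inner (extended_encode u) (extended_encode v) = 0"
proof -
  have "even ((2::nat) ^ (m - 1))"
    using assms(1) by simp
  then have "(of_nat (2 ^ (m - 1)) :: bit) = 0"
    by (simp only: of_nat_bit_eq_0_iff)
  then show ?thesis
    using inner_simplex_encode[OF assms]
    by (simp add: extended_encode_def inner_append inner_replicate)
qed

lemma self_orthogonal_extended_code:
  assumes "3 \<le> m"
  shows "self_orthogonal extended_length (extended_encode ` words m)"
proof -
  have "extended_encode u \<in> words extended_length" for u
    by (simp add: words_def)
  then show ?thesis
    using inner_extended_encode[OF assms] by (auto simp: self_orthogonal_def dual_code_def)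
qed

lemma minimal_code_extended_code:
  assumes "0 < m"
  shows "minimal_code extended_length (extended_encode ` words m)"
  unfolding minimal_code_def nonzero_words_extended_code[OF assms]
proof (intro ballI impI)
  fix c c' assume "c \<in> extended_encode ` (words m - {zero_word m})"
    and "c' \<in> extended_encode ` (words m - {zero_word m})"
    and supp_sub: "supp c' \<subseteq> supp c"
  then obtain u v where u: "u \<in> words m" "u \<noteq> zero_word m" and c: "c = extended_encode u"
    and v: "v \<in> words m" "v \<noteq> zero_word m" and c': "c' = extended_encode v"
    by blast
  have "supp (simplex_encode v) = supp c' \<inter> {..<2 ^ m - 1}"
    "supp (simplex_encode u) = supp c \<inter> {..<2 ^ m - 1}"
    using supp_eq_supp_append_Int[of "simplex_encode v" "replicate (2 ^ (m - 1)) (v ! 0)"]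
      supp_eq_supp_append_Int[of "simplex_encode u" "replicate (2 ^ (m - 1)) (u ! 0)"]
    by (simp_all add: c c' extended_encode_def)
  then have "supp (simplex_encode v) \<subseteq> supp (simplex_encode u)"
    using supp_sub by blast
  then have "simplex_encode v = simplex_encode u"
    by (intro eq_if_supp_subset_wt_le) (simp_all add: wt_simplex_encode u v)
  then have "v = u"
    using inj_on_simplex_encode u(1) v(1) by (simp add: inj_on_eq_iff)
  then show "c = c'"
    by (simp add: c c')
qed

definition extended_generator :: "nat \<Rightarrow> nat \<Rightarrow> bit" where
  "extended_generator i j = (if j < length ws then ws ! j ! i else if i = 0 then 1 else 0)"

lemma encode_extended_generator:
  assumes "0 < m" "u \<in> words m"
  shows "encode m extended_length extended_generator u = extended_encode u"
proof (rule nth_equalityI)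
  show "length (encode m extended_length extended_generator u) = length (extended_encode u)"
    by (simp add: encode_def)
  fix j assume "j < length (encode m extended_length extended_generator u)"
  then have "j < extended_length"
    by (simp add: encode_def)
  then have j: "j < 2 ^ m - 1 + 2 ^ (m - 1)"
    by (simp add: extended_length_def)
  from \<open>j < extended_length\<close> have "encode m extended_length extended_generator u ! j
      = (\<Sum>i<m. u ! i * extended_generator i j)"
    unfolding encode_def by (subst nth_map_upt) simp_all
  also have "\<dots> = extended_encode u ! j"
  proof (cases "j < length ws")
    case True
    then have "(\<Sum>i<m. u ! i * extended_generator i j) = inner u (ws ! j)"
      using assms(2) by (simp add: extended_generator_def inner_def words_def)
    then show ?thesis
      using True by (simp add: extended_encode_def simplex_encode_def nth_append length_ws)
  next
    case False
    have "(\<Sum>i<m. u ! i * extended_generator i j) = (\<Sum>i<m. if i = 0 then u ! i else 0)"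
      by (rule sum.cong) (simp_all add: extended_generator_def False)
    also have "\<dots> = u ! 0"
      using assms(1) by simp
    finally show ?thesis
      using False j by (simp add: extended_encode_def nth_append length_ws)
  qed
  finally show "encode m extended_length extended_generator u ! j = extended_encode u ! j" .
qed

lemma binary_linear_code_extended_code:
  assumes "0 < m"
  shows "binary_linear_code extended_length m (extended_encode ` words m)"
  unfolding binary_linear_code_def
proof (intro exI conjI)
  show "extended_encode ` words m
      = encode m extended_length extended_generator ` words m"
    using encode_extended_generator[OF assms] by (simp cong: image_cong)
  show "inj_on (encode m extended_length extended_generator) (words m)"
    using inj_on_extended_encode inj_on_cong[of "words m"] encode_extended_generator[OF assms]
    by metis
qed

end

theorem proposition5p2:
  fixes m :: nat
  assumes "m \<ge> 3"
  shows "\<exists>C. binary_linear_code (3 * 2^(m-1) - 1) m C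
           \<and> w_min (3 * 2^(m-1) - 1) C = 2^(m-1)
           \<and> w_max (3 * 2^(m-1) - 1) C = 2^m
           \<and> self_orthogonal (3 * 2^(m-1) - 1) C
           \<and> minimal_code (3 * 2^(m-1) - 1) C
           \<and> \<not> ashikhmin_barg (3 * 2^(m-1) - 1) C"
proof -
  obtain ws where ws: "distinct ws" "set ws = words m - {zero_word m}"
    using finite_distinct_list[of "words m - {zero_word m}"] by auto
  interpret nonzero_word_enumeration m ws
    by (intro nonzero_word_enumeration.intro ws)
  have length: "3 * 2 ^ (m - 1) - 1 = extended_length"
    unfolding extended_length_def using assms by (cases m) auto
  let ?C = "extended_encode ` words m"
  have w_min: "w_min extended_length ?C = 2 ^ (m - 1)"
    and w_max: "w_max extended_length ?C = 2 ^ m"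
    using assms by (simp_all add: w_min_extended_code w_max_extended_code)
  have "(2::nat) ^ m = 2 * 2 ^ (m - 1)"
    using assms by (cases m) auto
  then have "\<not> ashikhmin_barg extended_length ?C"
    using w_min w_max by (intro not_ashikhmin_barg_if_w_max_eq_double) simp
  then show ?thesis
    unfolding length
    using assms w_min w_max binary_linear_code_extended_code self_orthogonal_extended_code
      minimal_code_extended_code
    by auto
qed

end
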